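(* Let $J\subseteq\mathbb{R}$ be an interval, $f:J\to\mathbb{R}$ convex, and $a,b\in J$. Then $$\int_0^1 f\big(a\nabla_\nu b\big)\,d\nu\le \frac{f(a)+f(b)}{2}-\int_0^1\big(1-|2\nu-1|\big)\left(\int_0^1\left(\frac{f\big(a\nabla_{\nu\lambda}b\big)+f\big(b\nabla_{(1-\nu)\lambda}a\big)}{2}-f\Big(a\nabla_{\frac{1+\lambda(2\nu-1)}{2}}b\Big)\right)d\lambda\right)d\nu .$$
   Context: For real $x,y$ and $\mu\in[0,1]$, $x\nabla_\mu y:=(1-\mu)x+\mu y$. *)

theory Defs
  imports "HOL-Analysis.Analysis"
begin

definition wam :: "real \<Rightarrow> real \<Rightarrow> real \<Rightarrow> real" where
  "wam x \<mu> y = (1 - \<mu>) * x + \<mu> * y"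

end

theory Submission
  imports Defs
begin

text \<open>Put \<open>g \<nu> = f (a \<nabla>\<^sub>\<nu> b)\<close>, a convex function on \<open>[0,1]\<close>, and let
  \<open>D = (g 0 + g 1)/2 - g (1/2)\<close> be its midpoint defect. Convexity on \<open>[0,1/2]\<close> and on
  \<open>[1/2,1]\<close> places \<open>g\<close> below its chord lowered by \<open>D\<close> times the tent \<open>1 - \<bar>2\<nu> - 1\<bar>\<close>,
  whose integral is \<open>1/2\<close>; hence \<open>\<integral> g \<le> (g 0 + g 1)/2 - D/2\<close>. On the other hand, by
  monotonicity of slopes the midpoint defect of \<open>g\<close> on a subinterval never exceeds \<open>D\<close>,
  and the inner integrand is the midpoint defect of \<open>g\<close> on \<open>[\<nu>\<lambda>, 1 - (1-\<nu>)\<lambda>]\<close>; so the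
  subtracted double integral is at most \<open>D/2\<close>.\<close>

definition midpoint_defect :: "(real \<Rightarrow> real) \<Rightarrow> real \<Rightarrow> real \<Rightarrow> real" where
  "midpoint_defect g x y = (g x + g y) / 2 - g ((x + y) / 2)"

lemma midpoint_defect_nonneg:
  assumes "convex_on I g" "x \<in> I" "y \<in> I"
  shows "midpoint_defect g x y \<ge> 0"
  using convex_onD[OF assms(1), of "1/2" x y] assms(2,3) by (simp add: midpoint_defect_def field_simps)

lemma convex_on_slope_mono:
  fixes g :: "real \<Rightarrow> real"
  assumes g: "convex_on I g" and I: "p \<in> I" "s \<in> I"
    and "p < q" "p \<le> r" "r < s" "q \<le> s"
  shows "(g q - g p) * (s - r) \<le> (g s - g r) * (q - p)"
proof -
  have "(g q - g p) / (q - p) \<le> (g s - g p) / (s - p)"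
  proof (cases "q = s")
    case False
    then have "(g p - g q) / (p - q) \<le> (g p - g s) / (p - s)"
      using convex_on_slope_le(1)[OF g I, of q] assms by simp
    then show ?thesis
      by (metis minus_diff_eq minus_divide_divide)
  qed simp
  also have "\<dots> \<le> (g s - g r) / (s - r)"
  proof (cases "p = r")
    case False
    then have "(g p - g s) / (p - s) \<le> (g r - g s) / (r - s)"
      using convex_on_slope_le(2)[OF g I, of r] assms by simp
    then show ?thesis
      by (metis minus_diff_eq minus_divide_divide)
  qed simp
  finally show ?thesis
    using assms by (simp add: pos_divide_le_eq pos_le_divide_eq)
qed

lemma midpoint_defect_mono:
  fixes g :: "real \<Rightarrow> real"
  assumes g: "convex_on I g" and I: "p \<in> I" "q \<in> I"
    and "p \<le> x" "x \<le> y" "y \<le> q"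
  shows "midpoint_defect g x y \<le> midpoint_defect g p q"
proof -
  have sub: "{p..q} \<subseteq> I"
    using atMostAtLeast_subset_convex[OF convex_on_imp_convex[OF g] I] I
    by (cases "p < q") (auto simp: not_less dest: order_antisym)
  have left: "g x - g p \<le> 2 * (g ((x + y) / 2) - g ((p + y) / 2))"
  proof (cases "p = x")
    case False
    have "(g x - g p) * ((x + y) / 2 - (p + y) / 2) \<le> (g ((x + y) / 2) - g ((p + y) / 2)) * (x - p)"
      using False assms sub by (intro convex_on_slope_mono[OF g]) auto
    then have "(g x - g p) * (x - p) \<le> (2 * (g ((x + y) / 2) - g ((p + y) / 2))) * (x - p)"
      by (simp add: field_simps)
    then show ?thesis
      using False assms(4) by simp
  qed simp
  have right: "2 * (g ((p + q) / 2) - g ((p + y) / 2)) \<le> g q - g y"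
  proof (cases "y = q")
    case False
    have "(g ((p + q) / 2) - g ((p + y) / 2)) * (q - y) \<le> (g q - g y) * ((p + q) / 2 - (p + y) / 2)"
      using False assms sub by (intro convex_on_slope_mono[OF g]) auto
    then have "(2 * (g ((p + q) / 2) - g ((p + y) / 2))) * (q - y) \<le> (g q - g y) * (q - y)"
      by (simp add: field_simps)
    then show ?thesis
      using False assms(6) by simp
  qed simp
  from left right show ?thesis
    by (simp add: midpoint_defect_def field_simps)
qed

lemma convex_on_Icc_abs_bound:
  fixes g :: "real \<Rightarrow> real"
  assumes g: "convex_on {a..b} g" and x: "x \<in> {a..b}"
  shows "\<bar>g x\<bar> \<le> \<bar>g a\<bar> + \<bar>g b\<bar> + 2 * \<bar>g ((a + b) / 2)\<bar>"
proof -
  \<comment> \<open>The lower bound comes from convexity at the midpoint of \<open>x\<close> and its mirror image.\<close>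
  have x': "a + b - x \<in> {a..b}"
    using x by auto
  have "g ((a + b) / 2) \<le> (g x + g (a + b - x)) / 2"
    using convex_onD[OF g, of "1/2" x "a + b - x"] x x' by (simp add: field_simps)
  moreover have "g x \<le> max (g a) (g b)" "g (a + b - x) \<le> max (g a) (g b)"
    using convex_on_le_max[OF g] x x' by auto
  ultimately show ?thesis
    by (auto simp: max_def split: if_splits abs_split)
qed

lemma convex_on_Icc_integrable:
  fixes g :: "real \<Rightarrow> real"
  assumes g: "convex_on {a..b} g"
  shows "g integrable_on {a..b}"
proof -
  define B where "B = \<bar>g a\<bar> + \<bar>g b\<bar> + 2 * \<bar>g ((a + b) / 2)\<bar>"
  have "continuous_on {a<..<b} g"
    using g by (intro convex_on_continuous convex_on_subset[OF g]) auto
  then have "g \<in> borel_measurable (lebesgue_on {a<..<b})"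
    by (rule continuous_imp_measurable_on_sets_lebesgue) simp
  moreover have "(\<lambda>_. B) integrable_on {a<..<b}"
    using integrable_on_Icc_iff_Ioo by blast
  ultimately have "g integrable_on {a<..<b}"
    by (rule measurable_bounded_by_integrable_imp_integrable)
      (use convex_on_Icc_abs_bound[OF g] in \<open>auto simp: B_def\<close>)
  then show ?thesis
    by (simp add: integrable_on_Icc_iff_Ioo)
qed

lemma integral_le_has_integral_nonneg:
  fixes h k :: "'a::euclidean_space \<Rightarrow> real"
  assumes "(k has_integral c) S" "\<And>x. x \<in> S \<Longrightarrow> h x \<le> k x" "0 \<le> c"
  shows "integral S h \<le> c"
proof (cases "h integrable_on S")
  case True
  then show ?thesis
    using has_integral_le[OF integrable_integral assms(1)] assms(2) by blast
qed (simp add: not_integrable_integral assms(3))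

lemma tent_has_integral: "((\<lambda>\<nu>. 1 - \<bar>2 * \<nu> - 1\<bar>) has_integral 1/2) {0..1::real}"
proof -
  have "((\<lambda>\<nu>. 2 * \<nu>) has_integral 1/4) {0..1/2::real}"
    using has_integral_mult_left[OF ident_has_integral[of 0 "1/2::real"], of 2]
    by (simp add: power2_eq_square mult.commute)
  then have left: "((\<lambda>\<nu>. 1 - \<bar>2 * \<nu> - 1\<bar>) has_integral 1/4) {0..1/2::real}"
    by (rule has_integral_eq[rotated]) (auto simp: abs_if)
  have "((\<lambda>\<nu>. 2 - 2 * \<nu>) has_integral 1/4) {1/2..1::real}"
    using has_integral_diff[OF has_integral_const_real[of "2::real" "1/2" 1]
        has_integral_mult_left[OF ident_has_integral[of "1/2" "1::real"], of 2]]
    by (simp add: power2_eq_square mult.commute)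
  then have right: "((\<lambda>\<nu>. 1 - \<bar>2 * \<nu> - 1\<bar>) has_integral 1/4) {1/2..1::real}"
    by (rule has_integral_eq[rotated]) (auto simp: abs_if)
  show ?thesis
    using has_integral_combine[OF _ _ left right] by simp
qed

lemma convex_on_le_chord_minus_tent:
  fixes g :: "real \<Rightarrow> real"
  assumes g: "convex_on {0..1} g" and \<nu>: "\<nu> \<in> {0..1}"
  shows "g \<nu> \<le> (1 - \<nu>) * g 0 + \<nu> * g 1 - (1 - \<bar>2 * \<nu> - 1\<bar>) * midpoint_defect g 0 1"
proof (cases "\<nu> \<le> 1/2")
  case True
  have "g ((1 - 2 * \<nu>) *\<^sub>R 0 + (2 * \<nu>) *\<^sub>R (1/2)) \<le> (1 - 2 * \<nu>) * g 0 + (2 * \<nu>) * g (1/2)"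
    by (rule convex_onD[OF g]) (use True \<nu> in auto)
  moreover have "(1 - \<nu>) * g 0 + \<nu> * g 1 - (1 - \<bar>2 * \<nu> - 1\<bar>) * midpoint_defect g 0 1
      = (1 - 2 * \<nu>) * g 0 + (2 * \<nu>) * g (1/2)"
    using True by (simp add: midpoint_defect_def algebra_simps)
  ultimately show ?thesis
    by simp
next
  case False
  have arg: "(1 - (2 * \<nu> - 1)) *\<^sub>R (1/2) + (2 * \<nu> - 1) *\<^sub>R 1 = \<nu>"
    by (simp add: field_simps)
  have "g ((1 - (2 * \<nu> - 1)) *\<^sub>R (1/2) + (2 * \<nu> - 1) *\<^sub>R 1)
      \<le> (1 - (2 * \<nu> - 1)) * g (1/2) + (2 * \<nu> - 1) * g 1"
    by (rule convex_onD[OF g]) (use False \<nu> in auto)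
  then have "g \<nu> \<le> (1 - (2 * \<nu> - 1)) * g (1/2) + (2 * \<nu> - 1) * g 1"
    unfolding arg .
  moreover have "(1 - \<nu>) * g 0 + \<nu> * g 1 - (1 - \<bar>2 * \<nu> - 1\<bar>) * midpoint_defect g 0 1
      = (1 - (2 * \<nu> - 1)) * g (1/2) + (2 * \<nu> - 1) * g 1"
    using False by (simp add: midpoint_defect_def field_simps)
  ultimately show ?thesis
    by simp
qed

lemma convex_on_integral_le_chord_minus_defect:
  fixes g :: "real \<Rightarrow> real"
  assumes g: "convex_on {0..1} g"
  shows "integral {0..1} g \<le> (g 0 + g 1) / 2 - midpoint_defect g 0 1 / 2"
proof -
  have "((\<lambda>\<nu>. 1 * g 0 - \<nu> * g 0 + \<nu> * g 1 - (1 - \<bar>2 * \<nu> - 1\<bar>) * midpoint_defect g 0 1)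
      has_integral (1 * g 0 - 1/2 * g 0 + 1/2 * g 1 - 1/2 * midpoint_defect g 0 1)) {0..1}"
    using has_integral_const_real[of "1::real" 0 1] ident_has_integral[of 0 "1::real"]
    by (intro has_integral_diff has_integral_add has_integral_mult_left tent_has_integral) auto
  then have "((\<lambda>\<nu>. (1 - \<nu>) * g 0 + \<nu> * g 1 - (1 - \<bar>2 * \<nu> - 1\<bar>) * midpoint_defect g 0 1)
      has_integral ((g 0 + g 1) / 2 - midpoint_defect g 0 1 / 2)) {0..1}"
    by (simp add: algebra_simps add_divide_distrib)
  then show ?thesis
    using has_integral_le[OF integrable_integral[OF convex_on_Icc_integrable[OF g]]]
      convex_on_le_chord_minus_tent[OF g] by blast
qed

lemma convex_on_integral_le_chord_minus_weighted_defects: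
  fixes g :: "real \<Rightarrow> real"
  assumes g: "convex_on {0..1} g"
  shows "integral {0..1} g \<le> (g 0 + g 1) / 2 - integral {0..1} (\<lambda>\<nu>. (1 - \<bar>2 * \<nu> - 1\<bar>) *
      integral {0..1} (\<lambda>t. (g (\<nu> * t) + g (1 - (1 - \<nu>) * t)) / 2 - g ((1 + t * (2 * \<nu> - 1)) / 2)))"
proof -
  define D where "D = midpoint_defect g 0 1"
  have D_nonneg: "0 \<le> D"
    unfolding D_def by (rule midpoint_defect_nonneg[OF g]) auto
  have inner: "integral {0..1} (\<lambda>t. (g (\<nu> * t) + g (1 - (1 - \<nu>) * t)) / 2 - g ((1 + t * (2 * \<nu> - 1)) / 2))
      \<le> D" if \<nu>: "\<nu> \<in> {0..1}" for \<nu>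
  proof (rule integral_le_has_integral_nonneg[OF has_integral_const_real[of D 0 1, simplified] _ D_nonneg])
    fix t :: real assume t: "t \<in> {0..1}"
    have "(\<nu> * t + (1 - (1 - \<nu>) * t)) / 2 = (1 + t * (2 * \<nu> - 1)) / 2"
      by (simp add: algebra_simps)
    then have "midpoint_defect g (\<nu> * t) (1 - (1 - \<nu>) * t)
        = (g (\<nu> * t) + g (1 - (1 - \<nu>) * t)) / 2 - g ((1 + t * (2 * \<nu> - 1)) / 2)"
      by (simp only: midpoint_defect_def)
    moreover have "midpoint_defect g (\<nu> * t) (1 - (1 - \<nu>) * t) \<le> D"
      unfolding D_def using \<nu> t
      by (intro midpoint_defect_mono[OF g]) (auto simp: algebra_simps mult_le_one mult_left_le_one_le)
    ultimately show "(g (\<nu> * t) + g (1 - (1 - \<nu>) * t)) / 2 - g ((1 + t * (2 * \<nu> - 1)) / 2) \<le> D"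
      by simp
  qed
  have "integral {0..1} (\<lambda>\<nu>. (1 - \<bar>2 * \<nu> - 1\<bar>) *
      integral {0..1} (\<lambda>t. (g (\<nu> * t) + g (1 - (1 - \<nu>) * t)) / 2 - g ((1 + t * (2 * \<nu> - 1)) / 2)))
      \<le> 1/2 * D"
    using inner D_nonneg
    by (intro integral_le_has_integral_nonneg[OF has_integral_mult_left[OF tent_has_integral]])
      (auto intro!: mult_left_mono)
  then show ?thesis
    using convex_on_integral_le_chord_minus_defect[OF g] by (simp add: D_def)
qed

lemma wam_in_convex:
  assumes "convex J" "a \<in> J" "b \<in> J" "\<mu> \<in> {0..1}"
  shows "wam a \<mu> b \<in> J"
  using convexD[OF assms(1-3), of "1 - \<mu>" \<mu>] assms(4) by (simp add: wam_def)

lemma convex_on_along_segment: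
  assumes f: "convex_on J f" and J: "a \<in> J" "b \<in> J"
  shows "convex_on {0..1} (\<lambda>\<mu>. f (wam a \<mu> b))"
proof (rule convex_onI)
  fix t x y :: real assume t: "0 < t" "t < 1" and x: "x \<in> {0..1}" and y: "y \<in> {0..1}"
  have "wam a ((1 - t) *\<^sub>R x + t *\<^sub>R y) b = (1 - t) *\<^sub>R wam a x b + t *\<^sub>R wam a y b"
    by (simp add: wam_def algebra_simps)
  then show "f (wam a ((1 - t) *\<^sub>R x + t *\<^sub>R y) b) \<le> (1 - t) * f (wam a x b) + t * f (wam a y b)"
    using convex_onD[OF f, of t] t wam_in_convex[OF convex_on_imp_convex[OF f] J] x y by simp
qed simp

theorem corollary2p15:
  fixes J :: "real set" and f :: "real \<Rightarrow> real" and a b :: real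
  assumes "is_interval J"
    and "convex_on J f"
    and "a \<in> J" and "b \<in> J"
  shows "integral {0..1} (\<lambda>\<nu>. f (wam a \<nu> b))
    \<le> (f a + f b) / 2
       - integral {0..1} (\<lambda>\<nu>. (1 - \<bar>2 * \<nu> - 1\<bar>) *
           integral {0..1} (\<lambda>t.
             (f (wam a (\<nu> * t) b) + f (wam b ((1 - \<nu>) * t) a)) / 2
             - f (wam a ((1 + t * (2 * \<nu> - 1)) / 2) b)))"
proof -
  have "wam b s a = wam a (1 - s) b" for s
    by (simp add: wam_def algebra_simps)
  moreover have "wam a 0 b = a" "wam a 1 b = b"
    by (simp_all add: wam_def)
  ultimately show ?thesis
    using convex_on_integral_le_chord_minus_weighted_defects[OF convex_on_along_segment[OF assms(2-4)]]
    by simp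
qed

end
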